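(* Let $M$ be a closed $3$-manifold obtained by surgery on a framed oriented ordered link $L=L_1\cup\dots\cup L_m$ in an oriented integral homology $3$-sphere $N$, let $G=H_1(M)/\mathrm{Tors}\,H_1(M)$, let $[[t_i]]\in G$ be represented by the meridian of $L_i$, and let $I_0=\{i\mid[[t_i]]=1\}$. Assume that $I_0$ consists of all $i\in\{1,\dots,m\}$ except a certain $n$. Then the framing number of $L_n$ is $0$ and $lk(L_n,L_i)=0$ for all $i\ne n$. Moreover, for sets $I\subset J\subset I_0$, the group $H(L^{\overline I},L^{\overline I\cap J})$ has rank $1$ if and only if $I=J=I_0$.
   Context: $lk$ is the linking number in $N$; $lk(L_i,L_i)$ denotes the framing number. $\overline I=\{1,\dots,m\}\setminus I$, $L^K=\bigcup_{i\in K}L_i$. For a link $L'$ with components indexed by a set $K$ and a subset $K'\subsetneq K$, $H(L',L'^{K'})$ is the abelian group generated by $t_i$, $i\in K$, subject to the relations $\prod_{j\in K,j\ne i}(t_jt_i^{-1})^{lk(L_i,L_j)}=1$ for $i\in K'$. *)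

theory Defs
  imports Main
begin

definition zspan :: "nat set \<Rightarrow> (nat \<Rightarrow> nat \<Rightarrow> int) \<Rightarrow> (nat \<Rightarrow> int) set" where
  "zspan S r = {v. \<exists>c::nat \<Rightarrow> int. v = (\<lambda>j. \<Sum>i\<in>S. c i * r i j)}"

definition unit_vec :: "nat \<Rightarrow> nat \<Rightarrow> int" where
  "unit_vec i = (\<lambda>j. if j = i then 1 else 0)"

text \<open>x represents a torsion element of Z^n / R (i.e. it is trivial in the quotient mod torsion).\<close>
definition torsion_mod :: "(nat \<Rightarrow> int) set \<Rightarrow> (nat \<Rightarrow> int) \<Rightarrow> bool" where
  "torsion_mod R x \<longleftrightarrow> (\<exists>k::int. k \<noteq> 0 \<and> (\<lambda>j. k * x j) \<in> R)"

text \<open>Surgery relation for the meridian of L_i: sum_j lk(L_i,L_j) t_j = 0 (lk i i = framing).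
  H_1(M) = Z^{1..m} / zspan of these relations.\<close>
definition surgery_rel :: "(nat \<Rightarrow> nat \<Rightarrow> int) \<Rightarrow> nat \<Rightarrow> nat \<Rightarrow> nat \<Rightarrow> int" where
  "surgery_rel lk m i = (\<lambda>j. if j \<in> {1..m} then lk i j else 0)"

definition I0 :: "(nat \<Rightarrow> nat \<Rightarrow> int) \<Rightarrow> nat \<Rightarrow> nat set" where
  "I0 lk m = {i \<in> {1..m}. torsion_mod (zspan {1..m} (surgery_rel lk m)) (unit_vec i)}"

text \<open>Relation of H(L', L'^{K'}) for i in K': prod_{j in K, j ~= i} (t_j t_i^{-1})^{lk(L_i,L_j)} = 1,
  written additively.\<close>
definition H_rel :: "(nat \<Rightarrow> nat \<Rightarrow> int) \<Rightarrow> nat set \<Rightarrow> nat \<Rightarrow> nat \<Rightarrow> int" where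
  "H_rel lk K i = (\<lambda>j. if j \<in> K \<and> j \<noteq> i then lk i j
                       else if j = i then - (\<Sum>l\<in>K - {i}. lk i l) else 0)"

definition group_rank :: "nat set \<Rightarrow> (nat \<Rightarrow> int) set \<Rightarrow> nat" where
  "group_rank K R = (GREATEST r. \<exists>vs :: nat \<Rightarrow> nat \<Rightarrow> int.
      (\<forall>l<r. \<forall>j. j \<notin> K \<longrightarrow> vs l j = 0) \<and>
      (\<forall>c :: nat \<Rightarrow> int. (\<lambda>j. \<Sum>l<r. c l * vs l j) \<in> R \<longrightarrow> (\<forall>l<r. c l = 0)))"

text \<open>rank of H(L', L'^{K'}) where L' has components indexed by K.\<close>
definition H_rank :: "(nat \<Rightarrow> nat \<Rightarrow> int) \<Rightarrow> nat set \<Rightarrow> nat set \<Rightarrow> nat" where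
  "H_rank lk K K' = group_rank K (zspan K' (H_rel lk K))"

end

theory Submission imports Defs begin

text \<open>Modulo torsion the surgery relation of \<open>L\<^sub>i\<close> reduces to \<open>lk(L\<^sub>i,L\<^sub>n) t\<^sub>n\<close>,
  since all other meridians are torsion; as \<open>t\<^sub>n\<close> is not torsion, \<open>L\<^sub>n\<close> is unlinked from
  every component, itself included. Hence every relation of \<open>H(L', L'\<^sup>K\<^sup>')\<close> with
  \<open>n \<notin> K'\<close> has vanishing \<open>t\<^sub>n\<close>-coefficient and vanishing coefficient sum, two independent
  conditions as soon as \<open>L'\<close> has a component besides \<open>L\<^sub>n\<close>; then \<open>t\<^sub>n\<close> and that component's
  meridian are independent and the rank is at least 2. Otherwise \<open>L' = L\<^sub>n\<close>, there are no
  relations, and the rank is 1.\<close>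

text \<open>Fraction-free Gaussian elimination: clearing coordinate \<open>a\<close> with the pivot \<open>vs p\<close>
  multiplies instead of dividing, so a relation among the cleared vectors lifts over \<open>\<int>\<close>.\<close>
lemma relation_from_pivot_elimination:
  fixes vs :: "nat \<Rightarrow> nat \<Rightarrow> int"
  assumes S: "finite S" and p: "p \<in> S" "vs p a \<noteq> 0"
    and d: "\<exists>l\<in>S - {p}. d l \<noteq> 0"
      "\<forall>j. (\<Sum>l\<in>S - {p}. d l * (vs p a * vs l j - vs l a * vs p j)) = 0"
  shows "\<exists>c. (\<exists>l\<in>S. c l \<noteq> 0) \<and> (\<forall>j. (\<Sum>l\<in>S. c l * vs l j) = 0)"
proof -
  define c where "c l = (if l = p then - (\<Sum>l\<in>S - {p}. d l * vs l a) else d l * vs p a)" for l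
  have "\<exists>l\<in>S. c l \<noteq> 0"
    using d(1) p by (auto simp: c_def)
  moreover have "(\<Sum>l\<in>S. c l * vs l j) = 0" for j
  proof -
    have "(\<Sum>l\<in>S. c l * vs l j) = c p * vs p j + (\<Sum>l\<in>S - {p}. c l * vs l j)"
      using S p(1) by (simp add: sum.remove)
    also have "(\<Sum>l\<in>S - {p}. c l * vs l j) = (\<Sum>l\<in>S - {p}. d l * vs p a * vs l j)"
      by (rule sum.cong) (auto simp: c_def)
    also have "c p * vs p j = - (\<Sum>l\<in>S - {p}. d l * vs l a * vs p j)"
      by (simp add: c_def sum_distrib_right)
    finally have "(\<Sum>l\<in>S. c l * vs l j)
        = (\<Sum>l\<in>S - {p}. d l * (vs p a * vs l j - vs l a * vs p j))"
      by (simp add: algebra_simps sum_subtractf)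
    with d(2) show ?thesis by simp
  qed
  ultimately show ?thesis by blast
qed

lemma int_vectors_dependent:
  fixes vs :: "nat \<Rightarrow> nat \<Rightarrow> int"
  assumes "finite K" "finite S" "card K < card S"
    and "\<forall>l\<in>S. \<forall>j. j \<notin> K \<longrightarrow> vs l j = 0"
  shows "\<exists>c. (\<exists>l\<in>S. c l \<noteq> 0) \<and> (\<forall>j. (\<Sum>l\<in>S. c l * vs l j) = 0)"
  using assms
proof (induction K arbitrary: S vs rule: finite_induct)
  case empty
  then obtain l0 where "l0 \<in> S" by fastforce
  with empty show ?case by (intro exI[of _ "\<lambda>_. 1"]) auto
next
  case (insert a K)
  show ?case
  proof (cases "\<forall>l\<in>S. vs l a = 0")
    case True
    then have "\<forall>l\<in>S. \<forall>j. j \<notin> K \<longrightarrow> vs l j = 0"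
      using insert.prems(3) by (metis insert_iff)
    with insert show ?thesis by simp
  next
    case False
    then obtain p where p: "p \<in> S" "vs p a \<noteq> 0" by blast
    define w where "w l j = vs p a * vs l j - vs l a * vs p j" for l j
    have "card K < card (S - {p})"
      using insert p by simp
    moreover have "\<forall>l\<in>S - {p}. \<forall>j. j \<notin> K \<longrightarrow> w l j = 0"
    proof (intro ballI allI impI)
      fix l j assume "l \<in> S - {p}" "j \<notin> K"
      then show "w l j = 0"
        using insert.prems(3) p(1) by (cases "j = a") (auto simp: w_def)
    qed
    ultimately obtain d where "\<exists>l\<in>S - {p}. d l \<noteq> 0" "\<forall>j. (\<Sum>l\<in>S - {p}. d l * w l j) = 0"
      using insert.IH[of "S - {p}" w] insert.prems(1) by auto
    then show ?thesis
      using relation_from_pivot_elimination[of S p vs a, OF insert.prems(1) p] by (simp add: w_def)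
  qed
qed

lemma zspan_zero: "(\<lambda>j. 0) \<in> zspan S r"
  unfolding zspan_def by (intro CollectI exI[of _ "\<lambda>_. 0"]) simp

lemma zspan_empty: "zspan {} r = {\<lambda>j. 0}"
  unfolding zspan_def by auto

lemma zspan_lincomb:
  assumes "v \<in> zspan S r" "w \<in> zspan S r"
  shows "(\<lambda>j. a * v j + b * w j) \<in> zspan S r"
proof -
  obtain c d where "v = (\<lambda>j. \<Sum>i\<in>S. c i * r i j)" "w = (\<lambda>j. \<Sum>i\<in>S. d i * r i j)"
    using assms unfolding zspan_def by blast
  then show ?thesis unfolding zspan_def
    by (intro CollectI exI[of _ "\<lambda>i. a * c i + b * d i"])
       (auto simp: sum_distrib_left sum.distrib algebra_simps)
qed

lemma zspan_generator:
  assumes "finite S" "i \<in> S"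
  shows "r i \<in> zspan S r"
  unfolding zspan_def
proof (intro CollectI exI[of _ "\<lambda>x. if x = i then 1 else 0"] ext)
  fix j
  have "(\<Sum>x\<in>S. (if x = i then 1 else 0) * r x j) = (\<Sum>x\<in>S. if x = i then r x j else 0)"
    by (rule sum.cong) auto
  then show "r i j = (\<Sum>x\<in>S. (if x = i then 1 else 0) * r x j)"
    using assms by (simp add: sum.delta')
qed

lemma zspan_coordinate_eq_0:
  assumes "v \<in> zspan S r" "\<forall>i\<in>S. r i j = 0"
  shows "v j = 0"
  using assms unfolding zspan_def by auto

lemma zspan_sum_eq_0:
  assumes "v \<in> zspan S r" "\<forall>i\<in>S. (\<Sum>j\<in>A. r i j) = 0"
  shows "(\<Sum>j\<in>A. v j) = 0"
proof -
  obtain c where "v = (\<lambda>j. \<Sum>i\<in>S. c i * r i j)"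
    using assms(1) unfolding zspan_def by blast
  then have "(\<Sum>j\<in>A. v j) = (\<Sum>i\<in>S. c i * (\<Sum>j\<in>A. r i j))"
    by (simp add: sum.swap[of _ A] sum_distrib_left)
  with assms(2) show ?thesis by simp
qed

lemma torsion_mod_of_mem: "v \<in> R \<Longrightarrow> torsion_mod R v"
  unfolding torsion_mod_def by (intro exI[of _ 1]) auto

lemma torsion_mod_lincomb:
  assumes "torsion_mod (zspan S r) v" "torsion_mod (zspan S r) w"
  shows "torsion_mod (zspan S r) (\<lambda>j. a * v j + b * w j)"
proof -
  obtain k1 k2 where k: "k1 \<noteq> 0" "(\<lambda>j. k1 * v j) \<in> zspan S r"
      "k2 \<noteq> 0" "(\<lambda>j. k2 * w j) \<in> zspan S r"
    using assms unfolding torsion_mod_def by blast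
  have "(\<lambda>j. (k2 * a) * (k1 * v j) + (k1 * b) * (k2 * w j)) \<in> zspan S r"
    using zspan_lincomb[OF k(2) k(4)] by blast
  moreover have "(\<lambda>j. (k2 * a) * (k1 * v j) + (k1 * b) * (k2 * w j))
      = (\<lambda>j. (k1 * k2) * (a * v j + b * w j))"
    by (auto simp: algebra_simps)
  ultimately show ?thesis
    unfolding torsion_mod_def using k by (intro exI[of _ "k1 * k2"]) auto
qed

lemma torsion_mod_sum:
  assumes "finite A" "\<forall>x\<in>A. torsion_mod (zspan S r) (f x)"
  shows "torsion_mod (zspan S r) (\<lambda>j. \<Sum>x\<in>A. g x * f x j)"
  using assms
proof (induction A rule: finite_induct)
  case empty
  then show ?case using torsion_mod_of_mem[OF zspan_zero] by simp
next
  case (insert x A)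
  then have "torsion_mod (zspan S r) (\<lambda>j. g x * f x j + 1 * (\<Sum>x\<in>A. g x * f x j))"
    by (intro torsion_mod_lincomb) auto
  with insert show ?case by simp
qed

lemma torsion_mod_scaleD: "a \<noteq> 0 \<Longrightarrow> torsion_mod R (\<lambda>j. a * v j) \<Longrightarrow> torsion_mod R v"
  unfolding torsion_mod_def by (metis (no_types, lifting) ext mult.assoc no_zero_divisors)

definition independent_mod :: "nat set \<Rightarrow> (nat \<Rightarrow> int) set \<Rightarrow> nat \<Rightarrow> (nat \<Rightarrow> nat \<Rightarrow> int) \<Rightarrow> bool"
  where "independent_mod K R r vs \<longleftrightarrow>
    (\<forall>l<r. \<forall>j. j \<notin> K \<longrightarrow> vs l j = 0) \<and>
    (\<forall>c :: nat \<Rightarrow> int. (\<lambda>j. \<Sum>l<r. c l * vs l j) \<in> R \<longrightarrow> (\<forall>l<r. c l = 0))"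

lemma group_rank_eq_Greatest: "group_rank K R = (GREATEST r. \<exists>vs. independent_mod K R r vs)"
  unfolding group_rank_def independent_mod_def ..

lemma independent_mod_le_card:
  assumes "finite K" "(\<lambda>j. 0) \<in> R" "independent_mod K R r vs"
  shows "r \<le> card K"
proof (rule ccontr)
  assume "\<not> r \<le> card K"
  moreover have "\<forall>l\<in>{..<r}. \<forall>j. j \<notin> K \<longrightarrow> vs l j = 0"
    using assms(3) unfolding independent_mod_def by blast
  ultimately obtain c where c: "\<exists>l\<in>{..<r}. c l \<noteq> 0" "\<forall>j. (\<Sum>l<r. c l * vs l j) = 0"
    using int_vectors_dependent[OF assms(1), of "{..<r}" vs] by auto
  then have "(\<lambda>j. \<Sum>l<r. c l * vs l j) \<in> R"
    using assms(2) by simp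
  with c(1) assms(3) show False unfolding independent_mod_def by blast
qed

lemma group_rank_le_card:
  assumes "finite K" "(\<lambda>j. 0) \<in> R"
  shows "group_rank K R \<le> card K"
proof -
  have "\<exists>vs. independent_mod K R 0 vs"
    unfolding independent_mod_def by simp
  then have "\<exists>vs. independent_mod K R (group_rank K R) vs"
    unfolding group_rank_eq_Greatest
    by (rule GreatestI_nat) (use independent_mod_le_card[OF assms] in blast)
  then show ?thesis using independent_mod_le_card[OF assms] by blast
qed

lemma group_rank_ge:
  assumes "finite K" "(\<lambda>j. 0) \<in> R" "independent_mod K R r vs"
  shows "r \<le> group_rank K R"
  unfolding group_rank_eq_Greatest
  by (rule Greatest_le_nat) (use assms independent_mod_le_card[OF assms(1,2)] in blast)+

lemma group_rank_singleton_trivial: "group_rank {n} {\<lambda>j. 0} = 1"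
proof (rule antisym)
  show "group_rank {n} {\<lambda>j. 0} \<le> 1"
    using group_rank_le_card[of "{n}"] by simp
  have "independent_mod {n} {\<lambda>j. 0} 1 (\<lambda>_. unit_vec n)"
    unfolding independent_mod_def by (auto simp: unit_vec_def fun_eq_iff)
  then show "1 \<le> group_rank {n} {\<lambda>j. 0}"
    by (rule group_rank_ge[rotated 2]) auto
qed

lemma unit_vecs_independent_mod:
  assumes K: "finite K" "n \<in> K" "a \<in> K" "a \<noteq> n"
    and R: "\<And>v. v \<in> R \<Longrightarrow> v n = 0 \<and> (\<Sum>j\<in>K. v j) = 0"
  shows "independent_mod K R 2 (\<lambda>l. if l = 0 then unit_vec n else unit_vec a)"
  unfolding independent_mod_def
proof (intro conjI allI impI)
  fix l j assume "l < (2::nat)" "j \<notin> K"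
  with K show "(if l = 0 then unit_vec n else unit_vec a) j = 0"
    by (auto simp: unit_vec_def)
next
  fix c :: "nat \<Rightarrow> int" and l :: nat
  assume mem: "(\<lambda>j. \<Sum>l<2. c l * (if l = 0 then unit_vec n else unit_vec a) j) \<in> R"
    and "l < 2"
  then have "(\<lambda>j. c 0 * unit_vec n j + c 1 * unit_vec a j) \<in> R"
    by (simp add: numeral_2_eq_2)
  from R[OF this] have "c 0 * unit_vec n n + c 1 * unit_vec a n = 0"
      "(\<Sum>j\<in>K. c 0 * unit_vec n j + c 1 * unit_vec a j) = 0"
    by auto
  moreover have "(\<Sum>j\<in>K. unit_vec x j) = 1" if "x \<in> K" for x
    using K(1) that by (simp add: unit_vec_def)
  ultimately have "c 0 = 0" "c 1 = 0"
    using K by (auto simp: unit_vec_def sum.distrib sum_distrib_left[symmetric])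
  with \<open>l < 2\<close> show "c l = 0"
    by (cases l) (auto simp: numeral_2_eq_2 less_Suc_eq)
qed

lemma lk_eq_0_of_I0_eq_all_but:
  assumes n: "n \<in> {1..m}" and I0: "I0 lk m = {1..m} - {n}" and i: "i \<in> {1..m}"
  shows "lk i n = 0"
proof (rule ccontr)
  assume ne: "lk i n \<noteq> 0"
  let ?R = "zspan {1..m} (surgery_rel lk m)"
  let ?row = "surgery_rel lk m i"
  let ?A = "{1..m} - {n}"
  have "torsion_mod ?R ?row"
    using i by (intro torsion_mod_of_mem zspan_generator) auto
  moreover have "\<forall>x\<in>?A. torsion_mod ?R (unit_vec x)"
    using I0 unfolding I0_def by blast
  ultimately have "torsion_mod ?R (\<lambda>j. 1 * ?row j + (-1) * (\<Sum>x\<in>?A. ?row x * unit_vec x j))"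
    by (intro torsion_mod_lincomb torsion_mod_sum) auto
  moreover have "(\<lambda>j. 1 * ?row j + (-1) * (\<Sum>x\<in>?A. ?row x * unit_vec x j))
      = (\<lambda>j. ?row n * unit_vec n j)"
  proof
    fix j
    have "(\<Sum>x\<in>?A. ?row x * unit_vec x j) = (\<Sum>x\<in>?A. if x = j then ?row j else 0)"
      by (rule sum.cong) (auto simp: unit_vec_def)
    then show "1 * ?row j + (-1) * (\<Sum>x\<in>?A. ?row x * unit_vec x j) = ?row n * unit_vec n j"
      using n by (auto simp: unit_vec_def surgery_rel_def)
  qed
  ultimately have "torsion_mod ?R (unit_vec n)"
    using ne n torsion_mod_scaleD[of "?row n"] by (simp add: surgery_rel_def)
  with n have "n \<in> I0 lk m" unfolding I0_def by blast
  with I0 show False by blast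
qed

lemma H_rel_row_sum:
  assumes "finite K" "i \<in> K"
  shows "(\<Sum>j\<in>K. H_rel lk K i j) = 0"
proof -
  have "(\<Sum>j\<in>K. H_rel lk K i j) = H_rel lk K i i + (\<Sum>j\<in>K - {i}. H_rel lk K i j)"
    using assms by (simp add: sum.remove)
  also have "(\<Sum>j\<in>K - {i}. H_rel lk K i j) = (\<Sum>j\<in>K - {i}. lk i j)"
    by (rule sum.cong) (auto simp: H_rel_def)
  finally show ?thesis by (simp add: H_rel_def)
qed

lemma H_rank_ge_2_of_unlinked:
  assumes K: "finite K" "n \<in> K" "a \<in> K" "a \<noteq> n" "K' \<subseteq> K"
    and unlinked: "\<And>i. i \<in> K' \<Longrightarrow> i \<noteq> n \<and> lk i n = 0"
  shows "2 \<le> H_rank lk K K'"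
proof -
  have "v n = 0 \<and> (\<Sum>j\<in>K. v j) = 0" if "v \<in> zspan K' (H_rel lk K)" for v
  proof
    show "v n = 0"
      by (rule zspan_coordinate_eq_0[OF that]) (use unlinked K(2) in \<open>fastforce simp: H_rel_def\<close>)
    show "(\<Sum>j\<in>K. v j) = 0"
      by (rule zspan_sum_eq_0[OF that]) (use K(1,5) H_rel_row_sum in blast)
  qed
  then have "independent_mod K (zspan K' (H_rel lk K)) 2
      (\<lambda>l. if l = 0 then unit_vec n else unit_vec a)"
    using K by (intro unit_vecs_independent_mod) auto
  then show ?thesis
    unfolding H_rank_def by (rule group_rank_ge[OF K(1) zspan_zero])
qed

lemma H_rank_eq_1_iff:
  assumes n: "n \<in> {1..m}" and unlinked: "\<And>i. i \<in> {1..m} \<Longrightarrow> lk i n = 0"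
    and IJ: "I \<subseteq> J" "J \<subseteq> {1..m} - {n}"
  shows "H_rank lk ({1..m} - I) (({1..m} - I) \<inter> J) = 1 \<longleftrightarrow>
    I = {1..m} - {n} \<and> J = {1..m} - {n}"
proof (cases "I = {1..m} - {n}")
  case True
  with IJ have J: "J = {1..m} - {n}"
    by blast
  from True n have K: "{1..m} - I = {n}"
    by (simp add: Diff_Diff_Int)
  with J have "({1..m} - I) \<inter> J = {}"
    by simp
  with K show ?thesis
    using True J by (simp add: H_rank_def zspan_empty group_rank_singleton_trivial)
next
  case False
  then obtain a where a: "a \<in> {1..m} - I" "a \<noteq> n"
    using IJ by blast
  have "n \<in> {1..m} - I"
    using IJ n by blast
  moreover have "\<And>i. i \<in> ({1..m} - I) \<inter> J \<Longrightarrow> i \<noteq> n \<and> lk i n = 0"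
    using IJ unlinked by blast
  ultimately have "2 \<le> H_rank lk ({1..m} - I) (({1..m} - I) \<inter> J)"
    using a by (intro H_rank_ge_2_of_unlinked) auto
  with False show ?thesis by simp
qed

theorem lemma10p3:
  fixes lk :: "nat \<Rightarrow> nat \<Rightarrow> int" and m n :: nat
  assumes sym: "\<And>i j. i \<in> {1..m} \<Longrightarrow> j \<in> {1..m} \<Longrightarrow> lk i j = lk j i"
    and n: "n \<in> {1..m}"
    and I0: "I0 lk m = {1..m} - {n}"
  shows "lk n n = 0 \<and> (\<forall>i\<in>{1..m}. i \<noteq> n \<longrightarrow> lk n i = 0) \<and>
         (\<forall>I J. I \<subseteq> J \<and> J \<subseteq> I0 lk m \<longrightarrow>
            (H_rank lk ({1..m} - I) (({1..m} - I) \<inter> J) = 1 \<longleftrightarrow> I = I0 lk m \<and> J = I0 lk m))"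
proof -
  have unlinked: "lk i n = 0" if "i \<in> {1..m}" for i
    using lk_eq_0_of_I0_eq_all_but[OF n I0 that] .
  moreover have "lk n i = 0" if "i \<in> {1..m}" for i
    using sym[OF n that] unlinked[OF that] by simp
  ultimately show ?thesis
    using n H_rank_eq_1_iff[of n m lk, OF n unlinked] unfolding I0 by blast
qed

end
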